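(* For any pair of simplices $\sigma,\tau$ on $\gamma_d$, exactly one of the following four cases occurs: (A) $\sigma$ and $\tau$ do not overlap in $\mathbb{R}^d$; equivalently, they are not $(d+2)$-interlacing. (B) $\sigma<_{d+1}\tau$; equivalently, $\sigma,\tau$ are $(d+2)$-interlacing with a sequence beginning with an element of $\sigma$ but not with one beginning with an element of $\tau$ when $d$ is even, and with a sequence beginning with an element of $\tau$ but not with one beginning with an element of $\sigma$ when $d$ is odd. (C) $\tau<_{d+1}\sigma$; equivalently, the condition of (B) holds with the roles of $\sigma$ and $\tau$ interchanged. (D) the liftings $\hat\sigma$ and $\hat\tau$ overlap in $\mathbb{R}^{d+1}$; equivalently, $\sigma$ and $\tau$ are $(d+3)$-interlacing.
   Context: $\gamma_d=\{(t,t^2,\dots,t^d):t\in\mathbb{R}\}$; points on it are ordered by parameter. A simplex on $\gamma_d$ is a subset $\sigma\subseteq\gamma_d$ with $|\sigma|\le d+1$ (sizes of $\sigma,\tau$ may differ), identified with $\mathrm{conv}(\sigma)$. Simplices overlap in $\mathbb{R}^d$ if $\mathrm{conv}(\sigma)\cap\mathrm{conv}(\tau)\supsetneq\mathrm{conv}(\sigma\cap\tau)$. Subsets $\sigma,\tau$ are $k$-interlacing if there are $v_1<\dots<v_k$ in $\sigma\cup\tau$ with alternating membership, beginning either with $v_1\in\sigma$ ($v_1\in\sigma,v_2\in\tau,\dots$) or with $v_1\in\tau$ ($v_1\in\tau,v_2\in\sigma,\dots$). The lifting of $\sigma=\{\gamma_d(t_i)\}$ is $\hat\sigma=\{\gamma_{d+1}(t_i)\}\subseteq\mathbb{R}^{d+1}$;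 the height function $h_\sigma:\mathrm{conv}(\sigma)\to\mathbb{R}$ gives the last coordinate of the point of $\mathrm{conv}(\hat\sigma)$ projecting to $p$. $\sigma<_{d+1}\tau$ means $\sigma,\tau$ overlap in $\mathbb{R}^d$ and $h_\sigma\le h_\tau$ on $\mathrm{conv}(\sigma)\cap\mathrm{conv}(\tau)$. *)

theory Defs
  imports "HOL-Analysis.Analysis"
begin

text \<open>Points of R^d are represented as functions nat => real whose coordinates
  1..d carry the point (all other coordinates are 0). The moment curve:\<close>
definition moment :: "nat \<Rightarrow> real \<Rightarrow> (nat \<Rightarrow> real)" where
  "moment d t = (\<lambda>i. if 1 \<le> i \<and> i \<le> d then t ^ i else 0)"

text \<open>A simplex on gamma_d is given by its (finite) set of parameters, with at most d+1 elements.\<close>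
definition simplex_on :: "nat \<Rightarrow> real set \<Rightarrow> bool" where
  "simplex_on d S \<longleftrightarrow> finite S \<and> card S \<le> d + 1"

definition conv :: "nat \<Rightarrow> real set \<Rightarrow> (nat \<Rightarrow> real) set" where
  "conv d S = {p. \<exists>u. (\<forall>t\<in>S. 0 \<le> u t) \<and> sum u S = 1 \<and>
                       p = (\<lambda>i. \<Sum>t\<in>S. u t * moment d t i)}"

definition overlap :: "nat \<Rightarrow> real set \<Rightarrow> real set \<Rightarrow> bool" where
  "overlap d \<sigma> \<tau> \<longleftrightarrow> conv d (\<sigma> \<inter> \<tau>) \<subset> conv d \<sigma> \<inter> conv d \<tau>"

text \<open>k-interlacing sequence v_1 < ... < v_k starting in A (v_1 \<in> A, v_2 \<in> B, ...);
  index i = 0..k-1 corresponds to v_(i+1).\<close>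
definition interlacing_from :: "nat \<Rightarrow> real set \<Rightarrow> real set \<Rightarrow> bool" where
  "interlacing_from k A B \<longleftrightarrow>
     (\<exists>v :: nat \<Rightarrow> real. strict_mono_on {..<k} v \<and>
        (\<forall>i<k. (if even i then v i \<in> A else v i \<in> B)))"

definition interlacing :: "nat \<Rightarrow> real set \<Rightarrow> real set \<Rightarrow> bool" where
  "interlacing k \<sigma> \<tau> \<longleftrightarrow> interlacing_from k \<sigma> \<tau> \<or> interlacing_from k \<tau> \<sigma>"

definition proj :: "nat \<Rightarrow> (nat \<Rightarrow> real) \<Rightarrow> (nat \<Rightarrow> real)" where
  "proj d q = (\<lambda>i. if 1 \<le> i \<and> i \<le> d then q i else 0)"

text \<open>Height function: last coordinate of the point of conv(lifting of sigma)
  (the lifting lives on gamma_(d+1)) projecting to p.\<close>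
definition height :: "nat \<Rightarrow> real set \<Rightarrow> (nat \<Rightarrow> real) \<Rightarrow> real" where
  "height d \<sigma> p = (THE y. \<exists>q\<in>conv (d + 1) \<sigma>. proj d q = p \<and> q (d + 1) = y)"

definition below :: "nat \<Rightarrow> real set \<Rightarrow> real set \<Rightarrow> bool" where
  "below d \<sigma> \<tau> \<longleftrightarrow> overlap d \<sigma> \<tau> \<and>
     (\<forall>p \<in> conv d \<sigma> \<inter> conv d \<tau>. height d \<sigma> p \<le> height d \<tau> p)"

end

(*
  A point p in conv sigma and conv tau gives, through its two barycentric representations
  u and w, an affine dependence l = u - w of the points gamma_d(t), t in sigma \<union> tau, with
  l >= 0 on sigma - tau and l <= 0 on tau - sigma; conversely such a nonzero dependence,
  split into its positive and negative parts, gives a point of conv sigma \<inter> conv tau outside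
  conv (sigma \<inter> tau). The heights of the two lifts at p differ by the moment
  sum_t l(t) t^(d+1).

  A nonzero l whose moments of order 0, ..., e vanish changes sign at least e + 1 times along
  the curve, for otherwise a polynomial of degree at most e with the signs of l would be
  orthogonal to it. Conversely the divided difference at the points of an (e+2)-interlacing
  sequence is such a dependence, with moment (-1)^(e+1) of order e + 1. Hence overlapping
  in R^d means (d+2)-interlacing, and overlapping of the lifts means (d+3)-interlacing.
  Without the latter, the dependence coming from a point p and the divided difference cannot
  be combined into one with vanishing moment of order d + 1, so the sign of the height
  difference is the same at every common point and is fixed by the set that starts the
  interlacing sequences.
*)
theory Submission
  imports Defs "HOL-Computational_Algebra.Polynomial"
begin

section \<open>Divided differences\<close>

lemma sgn_prod_eq_prod_sgn:
  fixes f :: "'a \<Rightarrow> 'b::linordered_idom"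
  shows "sgn (\<Prod>x\<in>A. f x) = (\<Prod>x\<in>A. sgn (f x))"
  by (induction A rule: infinite_finite_induct) (auto simp: sgn_mult)

lemma sgn_prod_diff:
  fixes P :: "real set"
  assumes "finite P"
  shows "sgn (\<Prod>r\<in>P - {t}. r - t) = (-1) ^ card {r\<in>P. r < t}"
proof -
  have "sgn (\<Prod>r\<in>P - {t}. r - t) = (\<Prod>r\<in>P - {t}. if r < t then -1 else 1)"
    unfolding sgn_prod_eq_prod_sgn by (intro prod.cong) (auto simp: sgn_if)
  also have "\<dots> = (\<Prod>r\<in>{r\<in>P. r < t}. -1)"
    using assms by (intro prod.mono_neutral_cong_right) auto
  finally show ?thesis by simp
qed

lemma sum_power_div_prod_diff:
  fixes P :: "real set"
  assumes "finite P" "card P = Suc n" "j \<le> n"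
  shows "(\<Sum>t\<in>P. t ^ j / (\<Prod>r\<in>P - {t}. r - t)) = (if j = n then (-1) ^ n else 0)"
proof -
  define L where
    "L = (\<Sum>t\<in>P. smult (t ^ j / (\<Prod>r\<in>P - {t}. r - t)) (\<Prod>r\<in>P - {t}. [:r, -1:]))"
  have card_remove: "card (P - {t}) = n" if "t \<in> P" for t
    using that assms by simp
  have degree_basis: "degree (\<Prod>r\<in>P - {t}. [:r, -1:]) = n"
    and coeff_basis: "coeff (\<Prod>r\<in>P - {t}. [:r, -1:]) n = (-1) ^ n" if "t \<in> P" for t
  proof -
    show "degree (\<Prod>r\<in>P - {t}. [:r, -1:]) = n"
      using assms card_remove[OF that] by (subst degree_prod_eq_sum_degree) auto
    moreover have "lead_coeff (\<Prod>r\<in>P - {t}. [:r, -1:]) = (-1) ^ n"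
      using card_remove[OF that] by (subst lead_coeff_prod) auto
    ultimately show "coeff (\<Prod>r\<in>P - {t}. [:r, -1:]) n = (-1) ^ n" by simp
  qed
  have "poly L s = s ^ j" if "s \<in> P" for s
  proof -
    have "poly L s = (\<Sum>t\<in>P. t ^ j / (\<Prod>r\<in>P - {t}. r - t) * (\<Prod>r\<in>P - {t}. r - s))"
      by (simp add: L_def poly_sum poly_prod)
    also have "\<dots> = s ^ j / (\<Prod>r\<in>P - {s}. r - s) * (\<Prod>r\<in>P - {s}. r - s)"
      using assms(1) that by (subst sum.remove[OF assms(1) that]) (auto intro!: sum.neutral)
    also have "\<dots> = s ^ j" using assms(1) by simp
    finally show ?thesis .
  qed
  moreover have "degree L \<le> n"
    unfolding L_def using assms(1) degree_basis
    by (intro degree_sum_le) (auto intro: order.trans[OF degree_smult_le])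
  ultimately have "L = monom 1 j"
    using assms by (intro poly_eqI_degree[where A = P]) (auto simp: poly_monom degree_monom_eq)
  then have "(if j = n then 1 else 0) = coeff L n" by simp
  also have "\<dots> = (-1) ^ n * (\<Sum>t\<in>P. t ^ j / (\<Prod>r\<in>P - {t}. r - t))"
    by (simp add: L_def coeff_sum coeff_basis sum_distrib_left mult_ac cong: sum.cong)
  finally have "(-1) ^ n * (if j = n then 1 else 0) = (\<Sum>t\<in>P. t ^ j / (\<Prod>r\<in>P - {t}. r - t))"
    by (simp add: power_mult_distrib[symmetric])
  then show ?thesis by (cases "j = n") simp_all
qed

lemma sgn_prod_diff_strict_mono:
  fixes v :: "nat \<Rightarrow> real"
  assumes mono: "strict_mono_on {..<k} v" and "i < k"
  shows "sgn (\<Prod>r\<in>v ` {..<k} - {v i}. r - v i) = (-1) ^ i"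
proof -
  have "{r\<in>v ` {..<k}. r < v i} = v ` {..<i}"
    using assms(2) strict_mono_on_less[OF mono] by force
  moreover have "inj_on v {..<i}"
    by (rule inj_on_subset[OF strict_mono_on_imp_inj_on[OF mono]]) (use assms(2) in auto)
  ultimately have "card {r\<in>v ` {..<k}. r < v i} = i" by (simp add: card_image)
  then show ?thesis using sgn_prod_diff[of "v ` {..<k}" "v i"] by simp
qed

section \<open>Sign alternations\<close>

definition alternates :: "(real \<Rightarrow> real) \<Rightarrow> real set \<Rightarrow> nat \<Rightarrow> bool" where
  "alternates l S k \<longleftrightarrow> (\<exists>w s. (s = 1 \<or> s = -1) \<and> strict_mono_on {..<k} w \<and>
      (\<forall>i<k. w i \<in> S \<and> 0 < (-1) ^ i * s * l (w i)))"

lemma alternates_1: "t \<in> S \<Longrightarrow> l t \<noteq> 0 \<Longrightarrow> alternates l S 1"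
  unfolding alternates_def
  by (rule exI[of _ "\<lambda>_. t"], rule exI[of _ "sgn (l t)"]) (auto simp: sgn_if strict_mono_on_def)

lemma strict_mono_on_lessThan_snoc:
  fixes w :: "nat \<Rightarrow> 'a::linorder"
  assumes "strict_mono_on {..<Suc k} w" "w k < y"
  shows "strict_mono_on {..<Suc (Suc k)} (w(Suc k := y))"
proof (rule strict_mono_onI)
  fix i j assume ij: "i \<in> {..<Suc (Suc k)}" "j \<in> {..<Suc (Suc k)}" "i < j"
  show "(w(Suc k := y)) i < (w(Suc k := y)) j"
  proof (cases "j = Suc k")
    case True
    with ij have "w i \<le> w k" by (intro strict_mono_on_leD[OF assms(1)]) auto
    with True ij assms(2) show ?thesis by simp
  next
    case False
    with ij show ?thesis using strict_mono_onD[OF assms(1), of i j] by simp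
  qed
qed

lemma alternates_extend:
  assumes alt: "alternates l {t\<in>S. t \<le> b} (Suc k)"
    and "b \<in> S" "z \<in> S" "b < z" "l b * l z < 0"
  shows "alternates l S (Suc (Suc k))"
proof -
  from alt obtain w s where s: "s = 1 \<or> s = -1" and mono: "strict_mono_on {..<Suc k} w"
    and w: "\<forall>i<Suc k. w i \<in> S \<and> w i \<le> b \<and> 0 < (-1) ^ i * s * l (w i)"
    unfolding alternates_def by auto
  define a :: real where "a = (-1) ^ k * s"
  have last: "w k \<le> b" "0 < a * l (w k)" using w by (auto simp: a_def)
  obtain y where y: "y \<in> S" "w k < y" "a * l y < 0"
  proof (cases "a * l z < 0")
    case True
    then show ?thesis using that \<open>z \<in> S\<close> \<open>b < z\<close> last by force
  next
    case False
    then have "a * l b < 0"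
      using \<open>l b * l z < 0\<close> s by (auto simp: a_def mult_less_0_iff)
    moreover from this have "w k \<noteq> b" using last by auto
    ultimately show ?thesis using that \<open>b \<in> S\<close> last by force
  qed
  show ?thesis
    unfolding alternates_def
  proof (intro exI[of _ "w(Suc k := y)"] exI[of _ s] conjI)
    show "s = 1 \<or> s = -1" by fact
    show "strict_mono_on {..<Suc (Suc k)} (w(Suc k := y))"
      using strict_mono_on_lessThan_snoc[OF mono y(2)] .
    show "\<forall>i<Suc (Suc k). (w(Suc k := y)) i \<in> S \<and> 0 < (-1) ^ i * s * l ((w(Suc k := y)) i)"
      using s w y by (auto simp: a_def less_Suc_eq)
  qed
qed

lemma alternates_card_le:
  assumes "alternates l S k" "finite S"
  shows "k \<le> card S"
proof -
  from assms(1) obtain w where "strict_mono_on {..<k} w" "w ` {..<k} \<subseteq> S"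
    unfolding alternates_def by blast
  then have "card (w ` {..<k}) = k"
    by (simp add: card_image strict_mono_on_imp_inj_on)
  with \<open>w ` {..<k} \<subseteq> S\<close> assms(2) show ?thesis
    by (metis card_mono)
qed

lemma poly_sign_stable_right:
  fixes q :: "real poly"
  assumes "\<forall>x\<ge>b. poly q x \<noteq> 0" "b \<le> x"
  shows "0 < poly q b * poly q x"
proof (rule ccontr)
  assume "\<not> ?thesis"
  with assms have "poly q b * poly q x < 0"
    by (metis linorder_neqE_linordered_idom mult_eq_0_iff order.refl)
  moreover from this have "b < x" using assms(2) by (cases "b = x") (auto simp: mult_less_0_iff)
  ultimately obtain r where "b < r" "poly q r = 0" using poly_IVT by blast
  with assms(1) show False by simp
qed

lemma sign_poly_if_same_sign:
  fixes l :: "real \<Rightarrow> real"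
  assumes "\<forall>t\<in>S. \<forall>t'\<in>S. 0 \<le> l t * l t'"
  shows "\<exists>c::real. c \<noteq> 0 \<and> (\<forall>t\<in>S. l t \<noteq> 0 \<longrightarrow> 0 < l t * c)"
proof (intro exI conjI)
  define c :: real where "c = (if \<exists>t\<in>S. 0 < l t then 1 else -1)"
  show "c \<noteq> 0" by (simp add: c_def)
  show "\<forall>t\<in>S. l t \<noteq> 0 \<longrightarrow> 0 < l t * c"
  proof (intro ballI impI)
    fix t assume "t \<in> S" "l t \<noteq> 0"
    show "0 < l t * c"
    proof (cases "0 < l t")
      case False
      with \<open>l t \<noteq> 0\<close> have "l t < 0" by simp
      with assms \<open>t \<in> S\<close> have "\<forall>t'\<in>S. l t' \<le> 0"
        by (metis mult_less_0_iff not_le)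
      with \<open>l t < 0\<close> show ?thesis by (auto simp: c_def not_less)
    qed (use \<open>t \<in> S\<close> in \<open>auto simp: c_def\<close>)
  qed
qed

lemma last_sign_change:
  fixes l :: "real \<Rightarrow> real"
  assumes "finite S" "t\<^sub>1 \<in> S" "t\<^sub>2 \<in> S" "l t\<^sub>1 * l t\<^sub>2 < 0"
  obtains b z where "b \<in> S" "z \<in> S" "b < z" "l b * l z < 0"
    and "\<forall>t\<in>S. b < t \<longrightarrow> l t \<noteq> 0 \<longrightarrow> l t * l b < 0"
proof -
  define z where "z = Max {t\<in>S. l t \<noteq> 0}"
  have "t\<^sub>1 \<in> {t\<in>S. l t \<noteq> 0}" using assms by auto
  then have z: "z \<in> S" "l z \<noteq> 0" and z_max: "\<And>t. t \<in> S \<Longrightarrow> l t \<noteq> 0 \<Longrightarrow> t \<le> z"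
    using assms(1) Max_in[of "{t\<in>S. l t \<noteq> 0}"] by (auto simp: z_def)
  have "{t\<in>S. l t * l z < 0} \<noteq> {}"
    using assms z by (cases "l t\<^sub>1 * l z < 0") (auto simp: mult_less_0_iff)
  define b where "b = Max {t\<in>S. l t * l z < 0}"
  have b: "b \<in> S" "l b * l z < 0" and b_max: "\<And>t. t \<in> S \<Longrightarrow> l t * l z < 0 \<Longrightarrow> t \<le> b"
    using assms \<open>{t\<in>S. l t * l z < 0} \<noteq> {}\<close> Max_in[of "{t\<in>S. l t * l z < 0}"]
    by (auto simp: b_def)
  have "b \<le> z" using b z_max by fastforce
  moreover have "b \<noteq> z" using b by (auto simp: mult_less_0_iff)
  moreover have "l t * l b < 0" if "t \<in> S" "b < t" "l t \<noteq> 0" for t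
  proof -
    have "0 \<le> l t * l z" using b_max[OF that(1)] that(2) by fastforce
    with that(3) z(2) b(2) show ?thesis by (smt (verit) mult_less_0_iff zero_less_mult_iff)
  qed
  ultimately show ?thesis using that b z by fastforce
qed

lemma finite_gap_above:
  fixes S :: "real set"
  assumes "finite S"
  obtains c where "b < c" "\<forall>t\<in>S. b < t \<longrightarrow> c < t"
proof -
  define m where "m = Min (insert (b + 1) {t\<in>S. b < t})"
  have "b < m" "\<forall>t\<in>S. b < t \<longrightarrow> m \<le> t" using assms by (auto simp: m_def)
  then show ?thesis using that[of "(b + m) / 2"] by fastforce
qed

lemma sign_poly_extend:
  fixes l :: "real \<Rightarrow> real" and q :: "real poly"
  assumes "finite S" "b \<in> S" "z \<in> S" "b < z" "l b \<noteq> 0"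
    and right: "\<forall>t\<in>S. b < t \<longrightarrow> l t \<noteq> 0 \<longrightarrow> l t * l b < 0"
    and left: "\<forall>t\<in>S. t \<le> b \<longrightarrow> l t \<noteq> 0 \<longrightarrow> 0 < l t * poly q t"
    and nonzero: "\<forall>x\<ge>b. poly q x \<noteq> 0"
  obtains c where "\<forall>t\<in>S. l t \<noteq> 0 \<longrightarrow> 0 < l t * poly (q * [:c, -1:]) t"
    and "\<forall>x. (\<forall>t\<in>S. t \<le> x) \<longrightarrow> poly (q * [:c, -1:]) x \<noteq> 0"
proof -
  obtain c where "b < c" and c: "\<forall>t\<in>S. b < t \<longrightarrow> c < t"
    using finite_gap_above[OF assms(1)] by blast
  have poly_eq: "poly (q * [:c, -1:]) x = poly q x * (c - x)" for x
    by (simp add: algebra_simps)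
  show ?thesis
  proof (rule that; intro allI ballI impI)
    fix t assume "t \<in> S" "l t \<noteq> 0"
    show "0 < l t * poly (q * [:c, -1:]) t"
    proof (cases "t \<le> b")
      case True
      with left \<open>t \<in> S\<close> \<open>l t \<noteq> 0\<close> \<open>b < c\<close> have "0 < l t * poly q t" "0 < c - t" by auto
      then show ?thesis unfolding poly_eq mult.assoc[symmetric] by (rule mult_pos_pos)
    next
      case False
      have "0 < l b * poly q b" using left assms(2,5) by simp
      moreover have "0 < poly q b * poly q t"
        using poly_sign_stable_right[OF nonzero] False by simp
      moreover have "l t * l b < 0" using right \<open>t \<in> S\<close> \<open>l t \<noteq> 0\<close> False by simp
      ultimately have "l t * poly q t < 0"
        by (smt (verit) mult_less_0_iff zero_less_mult_iff)
      moreover have "c < t" using c \<open>t \<in> S\<close> False by simp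
      ultimately show ?thesis
        unfolding poly_eq mult.assoc[symmetric] by (intro mult_neg_neg) auto
    qed
  next
    fix x assume "\<forall>t\<in>S. t \<le> x"
    then have "b \<le> x" "c < x" using assms(3,4) c by force+
    then show "poly (q * [:c, -1:]) x \<noteq> 0" using nonzero by (simp add: poly_eq)
  qed
qed

text \<open>The last conjunct, that \<open>q\<close> has no root to the right of \<open>S\<close>, keeps the induction going.\<close>
lemma sign_poly_if_not_alternates:
  fixes l :: "real \<Rightarrow> real"
  assumes "finite S" "\<not> alternates l S (n + 2)"
  shows "\<exists>q. degree q \<le> n \<and> (\<forall>t\<in>S. l t \<noteq> 0 \<longrightarrow> 0 < l t * poly q t) \<and>
             (\<forall>x. (\<forall>t\<in>S. t \<le> x) \<longrightarrow> poly q x \<noteq> 0)"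
  using assms
proof (induction n arbitrary: S rule: less_induct)
  case (less n S)
  show ?case
  proof (cases "\<forall>t\<in>S. \<forall>t'\<in>S. 0 \<le> l t * l t'")
    case True
    then obtain c where "c \<noteq> 0" "\<forall>t\<in>S. l t \<noteq> 0 \<longrightarrow> 0 < l t * c"
      using sign_poly_if_same_sign by blast
    then show ?thesis by (intro exI[of _ "[:c:]"]) simp
  next
    case False
    then obtain t\<^sub>1 t\<^sub>2 where "t\<^sub>1 \<in> S" "t\<^sub>2 \<in> S" "l t\<^sub>1 * l t\<^sub>2 < 0" by (auto simp: not_le)
    then obtain b z where bz: "b \<in> S" "z \<in> S" "b < z" "l b * l z < 0"
      and right: "\<forall>t\<in>S. b < t \<longrightarrow> l t \<noteq> 0 \<longrightarrow> l t * l b < 0"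
      using last_sign_change[OF less.prems(1)] by metis
    define S' where "S' = {t\<in>S. t \<le> b}"
    have "l b \<noteq> 0" using bz by auto
    have extend: "alternates l S' (Suc k) \<Longrightarrow> alternates l S (Suc (Suc k))" for k
      using alternates_extend bz unfolding S'_def by blast
    obtain m where m: "n = Suc m"
    proof (cases n)
      case 0
      have "alternates l S' 1" using alternates_1[of b S' l] bz \<open>l b \<noteq> 0\<close> by (simp add: S'_def)
      with extend[of 0] less.prems(2) 0 show ?thesis by (simp add: numeral_2_eq_2)
    qed
    have "\<not> alternates l S' (m + 2)"
      using extend[of "Suc m"] less.prems(2) m by auto
    then obtain q where q: "degree q \<le> m" "\<forall>t\<in>S'. l t \<noteq> 0 \<longrightarrow> 0 < l t * poly q t"
      and q_right: "\<forall>x. (\<forall>t\<in>S'. t \<le> x) \<longrightarrow> poly q x \<noteq> 0"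
      using less.IH[of m S'] less.prems(1) m by (auto simp: S'_def)
    obtain c where "\<forall>t\<in>S. l t \<noteq> 0 \<longrightarrow> 0 < l t * poly (q * [:c, -1:]) t"
      and "\<forall>x. (\<forall>t\<in>S. t \<le> x) \<longrightarrow> poly (q * [:c, -1:]) x \<noteq> 0"
      using sign_poly_extend[OF less.prems(1) bz(1-3) \<open>l b \<noteq> 0\<close> right, of q] q q_right
      by (auto simp: S'_def)
    moreover have "degree (q * [:c, -1:]) \<le> n"
      using degree_mult_le[of q "[:c, -1:]"] q(1) m by simp
    ultimately show ?thesis by blast
  qed
qed

section \<open>Moments and signed dependences\<close>

definition power_moment :: "real set \<Rightarrow> (real \<Rightarrow> real) \<Rightarrow> nat \<Rightarrow> real" where
  "power_moment S l j = (\<Sum>t\<in>S. l t * t ^ j)"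

lemma power_moment_0: "power_moment S u 0 = sum u S"
  by (simp add: power_moment_def)

lemma power_moment_add:
  "power_moment S (\<lambda>t. a t + b t) j = power_moment S a j + power_moment S b j"
  by (simp add: power_moment_def distrib_right sum.distrib)

lemma power_moment_scale: "power_moment S (\<lambda>t. c * a t) j = c * power_moment S a j"
  by (simp add: power_moment_def sum_distrib_left mult.assoc)

lemma power_moment_diff:
  "power_moment S (\<lambda>t. u t - w t) j = power_moment S u j - power_moment S w j"
  by (simp add: power_moment_def left_diff_distrib sum_subtractf)

lemma power_moment_mono_neutral:
  "finite T \<Longrightarrow> S \<subseteq> T \<Longrightarrow> \<forall>t\<in>T - S. u t = 0 \<Longrightarrow> power_moment S u j = power_moment T u j"
  unfolding power_moment_def by (rule sum.mono_neutral_left) auto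

lemma power_moment_extend:
  assumes "finite T" "S \<subseteq> T"
  shows "power_moment T (\<lambda>t. if t \<in> S then u t else 0) j = power_moment S u j"
proof -
  have "power_moment T (\<lambda>t. if t \<in> S then u t else 0) j = (\<Sum>t\<in>T. if t \<in> S then u t * t ^ j else 0)"
    unfolding power_moment_def by (intro sum.cong) auto
  also have "\<dots> = power_moment S u j"
    using assms by (simp add: power_moment_def sum.inter_restrict[symmetric] Int_absorb1)
  finally show ?thesis .
qed

lemma power_moment_poly:
  "(\<Sum>t\<in>S. l t * poly q t) = (\<Sum>i\<le>degree q. coeff q i * power_moment S l i)"
proof -
  have "(\<Sum>t\<in>S. l t * poly q t) = (\<Sum>t\<in>S. \<Sum>i\<le>degree q. coeff q i * (l t * t ^ i))"
    by (simp add: poly_altdef sum_distrib_left mult_ac)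
  also have "\<dots> = (\<Sum>i\<le>degree q. coeff q i * power_moment S l i)"
    unfolding power_moment_def by (subst sum.swap) (simp add: sum_distrib_left)
  finally show ?thesis .
qed

text \<open>Descartes' rule of signs in dual form: a nonzero weight orthogonal to all polynomials
  of degree at most \<open>e\<close> changes sign at least \<open>e + 1\<close> times.\<close>
lemma alternates_if_power_moments_vanish:
  assumes "finite S" "\<forall>j\<le>e. power_moment S l j = 0" "\<exists>t\<in>S. l t \<noteq> 0"
  shows "alternates l S (e + 2)"
proof (rule ccontr)
  assume "\<not> ?thesis"
  then obtain q where "degree q \<le> e" and q: "\<forall>t\<in>S. l t \<noteq> 0 \<longrightarrow> 0 < l t * poly q t"
    using sign_poly_if_not_alternates[OF assms(1)] by blast
  then have "(\<Sum>t\<in>S. l t * poly q t) = 0"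
    using assms(2) by (simp add: power_moment_poly)
  moreover have "0 \<le> l t * poly q t" if "t \<in> S" for t
    using q that by (cases "l t = 0") auto
  ultimately have "\<forall>t\<in>S. l t * poly q t = 0"
    by (subst (asm) sum_nonneg_eq_0_iff[OF assms(1)]) auto
  with q assms(3) show False by force
qed

lemma power_moments_vanish_imp_zero:
  assumes "finite S" "card S \<le> e + 1" "\<forall>j\<le>e. power_moment S l j = 0"
  shows "\<forall>t\<in>S. l t = 0"
proof (rule ccontr)
  assume "\<not> ?thesis"
  then have "alternates l S (e + 2)"
    using alternates_if_power_moments_vanish[OF assms(1,3)] by blast
  with alternates_card_le assms(1,2) show False by fastforce
qed

text \<open>Vanishing of the moments \<open>0, \<dots>, e\<close> says that \<open>l\<close> is an affine dependence of the
  points \<open>moment e t\<close>, \<open>t \<in> \<sigma> \<union> \<tau>\<close>.\<close>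
definition signed_dependence :: "nat \<Rightarrow> real set \<Rightarrow> real set \<Rightarrow> (real \<Rightarrow> real) \<Rightarrow> bool" where
  "signed_dependence e \<sigma> \<tau> l \<longleftrightarrow> (\<forall>j\<le>e. power_moment (\<sigma> \<union> \<tau>) l j = 0) \<and>
     (\<forall>t\<in>\<sigma> - \<tau>. 0 \<le> l t) \<and> (\<forall>t\<in>\<tau> - \<sigma>. l t \<le> 0)"

lemma signed_dependence_swap:
  "signed_dependence e \<tau> \<sigma> l \<Longrightarrow> signed_dependence e \<sigma> \<tau> (\<lambda>t. - l t)"
  by (simp add: signed_dependence_def power_moment_def sum_negf Un_commute)

lemma signed_dependence_add:
  "signed_dependence e \<sigma> \<tau> a \<Longrightarrow> signed_dependence e \<sigma> \<tau> b \<Longrightarrow> signed_dependence e \<sigma> \<tau> (\<lambda>t. a t + b t)"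
  by (simp add: signed_dependence_def power_moment_add add_nonpos_nonpos)

lemma signed_dependence_scale:
  "0 \<le> c \<Longrightarrow> signed_dependence e \<sigma> \<tau> a \<Longrightarrow> signed_dependence e \<sigma> \<tau> (\<lambda>t. c * a t)"
  by (simp add: signed_dependence_def power_moment_scale mult_nonneg_nonpos)

lemma signed_dependence_eq_zero:
  assumes "finite \<sigma>" "finite \<tau>" "card \<sigma> \<le> e + 1" "signed_dependence e \<sigma> \<tau> l"
    and "\<forall>t\<in>(\<sigma> - \<tau>) \<union> (\<tau> - \<sigma>). l t = 0"
  shows "\<forall>t\<in>\<sigma> \<union> \<tau>. l t = 0"
proof -
  have "power_moment (\<sigma> \<inter> \<tau>) l j = power_moment (\<sigma> \<union> \<tau>) l j" for j
    using assms(1,2,5) by (intro power_moment_mono_neutral) auto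
  moreover have "card (\<sigma> \<inter> \<tau>) \<le> e + 1"
    using assms(1,3) card_mono[of \<sigma> "\<sigma> \<inter> \<tau>"] by simp
  ultimately have "\<forall>t\<in>\<sigma> \<inter> \<tau>. l t = 0"
    using power_moments_vanish_imp_zero[of "\<sigma> \<inter> \<tau>" e l] assms(1,4)
    by (simp add: signed_dependence_def)
  with assms(5) show ?thesis by blast
qed

lemma signed_dependence_add_nonzero:
  assumes fin: "finite \<sigma>" "finite \<tau>" "card \<sigma> \<le> e + 1"
    and a: "signed_dependence e \<sigma> \<tau> a" and b: "signed_dependence e \<sigma> \<tau> b"
    and nonzero: "\<exists>t\<in>\<sigma> \<union> \<tau>. a t \<noteq> 0"
  shows "\<exists>t\<in>\<sigma> \<union> \<tau>. a t + b t \<noteq> 0"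
proof (rule ccontr)
  assume cancel: "\<not> ?thesis"
  have "a t = 0" if "t \<in> (\<sigma> - \<tau>) \<union> (\<tau> - \<sigma>)" for t
  proof -
    have "a t + b t = 0" using cancel that by blast
    moreover have "0 \<le> a t \<and> 0 \<le> b t \<or> a t \<le> 0 \<and> b t \<le> 0"
      using a b that unfolding signed_dependence_def by blast
    ultimately show ?thesis by linarith
  qed
  with signed_dependence_eq_zero[OF fin a] nonzero show False by blast
qed

lemma alternates_imp_interlacing:
  assumes "signed_dependence e \<sigma> \<tau> l" "alternates l (\<sigma> \<union> \<tau>) k"
  shows "interlacing k \<sigma> \<tau>"
proof -
  from assms(2) obtain w s where s: "s = 1 \<or> s = -1" and mono: "strict_mono_on {..<k} w"
    and w: "\<forall>i<k. w i \<in> \<sigma> \<union> \<tau> \<and> 0 < (-1) ^ i * s * l (w i)"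
    unfolding alternates_def by blast
  have in_\<sigma>: "w i \<in> \<sigma>" if "i < k" "0 < l (w i)" for i
    using assms(1) w that by (force simp: signed_dependence_def)
  have in_\<tau>: "w i \<in> \<tau>" if "i < k" "l (w i) < 0" for i
    using assms(1) w that by (force simp: signed_dependence_def)
  have from_s: "if even i = (s = 1) then w i \<in> \<sigma> else w i \<in> \<tau>" if "i < k" for i
  proof -
    have "0 < (-1) ^ i * s * l (w i)" using w that by blast
    then have "if even i = (s = 1) then 0 < l (w i) else l (w i) < 0"
      using s by (auto simp: minus_one_power_iff zero_less_mult_iff)
    then show ?thesis using in_\<sigma>[OF that] in_\<tau>[OF that] by presburger
  qed
  show ?thesis
  proof (cases "s = 1")
    case True
    then have "interlacing_from k \<sigma> \<tau>"
      unfolding interlacing_from_def using mono from_s by (intro exI[of _ w]) simp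
    then show ?thesis by (simp add: interlacing_def)
  next
    case False
    then have "interlacing_from k \<tau> \<sigma>"
      unfolding interlacing_from_def using mono from_s by (intro exI[of _ w]) simp
    then show ?thesis by (simp add: interlacing_def)
  qed
qed

lemma interlacing_from_imp_signed_dependence:
  assumes "finite \<sigma>" "finite \<tau>" "interlacing_from (e + 2) \<sigma> \<tau>"
  obtains l where "signed_dependence e \<sigma> \<tau> l" "\<exists>t\<in>\<sigma> \<union> \<tau>. l t \<noteq> 0"
    and "power_moment (\<sigma> \<union> \<tau>) l (e + 1) = (-1) ^ (e + 1)"
proof -
  obtain v where mono: "strict_mono_on {..<e + 2} v"
    and v: "\<forall>i<e + 2. if even i then v i \<in> \<sigma> else v i \<in> \<tau>"
    using assms(3) unfolding interlacing_from_def by blast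
  define P where "P = v ` {..<e + 2}"
  have "card P = Suc (e + 1)"
    using strict_mono_on_imp_inj_on[OF mono] by (simp add: P_def card_image)
  have "finite P" "P \<subseteq> \<sigma> \<union> \<tau>" using v by (auto simp: P_def split: if_splits)
  \<comment> \<open>the divided-difference functional at the nodes \<open>P\<close>\<close>
  define l where "l = (\<lambda>t. if t \<in> P then 1 / (\<Prod>r\<in>P - {t}. r - t) else 0)"
  have moments: "power_moment (\<sigma> \<union> \<tau>) l j = (if j = e + 1 then (-1) ^ (e + 1) else 0)"
    if "j \<le> e + 1" for j
  proof -
    have "power_moment (\<sigma> \<union> \<tau>) l j = power_moment P (\<lambda>t. 1 / (\<Prod>r\<in>P - {t}. r - t)) j"
      using assms(1,2) \<open>P \<subseteq> \<sigma> \<union> \<tau>\<close> by (simp add: l_def power_moment_extend)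
    also have "\<dots> = (if j = e + 1 then (-1) ^ (e + 1) else 0)"
      using sum_power_div_prod_diff[OF \<open>finite P\<close> \<open>card P = Suc (e + 1)\<close> that]
      by (simp add: power_moment_def)
    finally show ?thesis .
  qed
  have sgn_l: "sgn (l (v i)) = (-1) ^ i" if "i < e + 2" for i
  proof -
    have "1 / (-1) ^ i = ((-1) ^ i :: real)" by (cases "even i") simp_all
    with sgn_prod_diff_strict_mono[OF mono that] that show ?thesis
      by (simp add: l_def P_def sgn_divide)
  qed
  have "signed_dependence e \<sigma> \<tau> l"
    unfolding signed_dependence_def
  proof (intro conjI ballI allI impI)
    show "power_moment (\<sigma> \<union> \<tau>) l j = 0" if "j \<le> e" for j
      using moments[of j] that by simp
    show "0 \<le> l t" if "t \<in> \<sigma> - \<tau>" for t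
    proof (cases "t \<in> P")
      case True
      then obtain i where "i < e + 2" "t = v i" by (auto simp: P_def)
      with v that sgn_l[of i] show ?thesis by (cases "even i") (auto simp: sgn_1_pos)
    qed (simp add: l_def)
    show "l t \<le> 0" if "t \<in> \<tau> - \<sigma>" for t
    proof (cases "t \<in> P")
      case True
      then obtain i where "i < e + 2" "t = v i" by (auto simp: P_def)
      with v that sgn_l[of i] show ?thesis by (cases "even i") (auto simp: sgn_1_neg)
    qed (simp add: l_def)
  qed
  moreover have "v 0 \<in> \<sigma> \<union> \<tau>" "l (v 0) \<noteq> 0"
    using v sgn_l[of 0] by auto
  ultimately show ?thesis using that moments[of "e + 1"] by auto
qed

lemma interlacing_from_Suc:
  assumes "interlacing_from (Suc k) A B"
  shows "interlacing_from k A B" "interlacing_from k B A"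
proof -
  from assms obtain v where mono: "strict_mono_on {..<Suc k} v"
    and v: "\<forall>i<Suc k. if even i then v i \<in> A else v i \<in> B"
    unfolding interlacing_from_def by blast
  have "strict_mono_on {..<k} v" "\<forall>i<k. if even i then v i \<in> A else v i \<in> B"
    using v strict_mono_onD[OF mono] by (auto intro!: strict_mono_onI)
  then show "interlacing_from k A B" unfolding interlacing_from_def by blast
  have "strict_mono_on {..<k} (\<lambda>i. v (Suc i))"
    "\<forall>i<k. if even i then v (Suc i) \<in> B else v (Suc i) \<in> A"
    using v strict_mono_onD[OF mono] by (auto intro!: strict_mono_onI)
  then show "interlacing_from k B A" unfolding interlacing_from_def by blast
qed

lemma interlacing_Suc_imp_from_both:
  "interlacing (Suc k) \<sigma> \<tau> \<Longrightarrow> interlacing_from k \<sigma> \<tau> \<and> interlacing_from k \<tau> \<sigma>"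
  unfolding interlacing_def using interlacing_from_Suc by blast

section \<open>Convex hulls and heights on the moment curve\<close>

definition curve_comb :: "nat \<Rightarrow> real set \<Rightarrow> (real \<Rightarrow> real) \<Rightarrow> nat \<Rightarrow> real" where
  "curve_comb e S u = (\<lambda>i. \<Sum>t\<in>S. u t * moment e t i)"

lemma conv_iff_curve_comb:
  "p \<in> conv e S \<longleftrightarrow> (\<exists>u. (\<forall>t\<in>S. 0 \<le> u t) \<and> sum u S = 1 \<and> p = curve_comb e S u)"
  by (simp add: conv_def curve_comb_def)

lemma curve_comb_apply:
  "curve_comb e S u i = (if 1 \<le> i \<and> i \<le> e then power_moment S u i else 0)"
  by (auto simp: curve_comb_def moment_def power_moment_def)

lemma curve_comb_eq_iff:
  "curve_comb e S u = curve_comb e T w \<longleftrightarrow> (\<forall>j\<in>{1..e}. power_moment S u j = power_moment T w j)"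
  by (auto simp: fun_eq_iff curve_comb_apply)

lemma proj_curve_comb [simp]: "proj e (curve_comb (Suc e) S u) = curve_comb e S u"
  by (simp add: fun_eq_iff proj_def curve_comb_apply)

lemma curve_comb_extend:
  assumes "finite T" "S \<subseteq> T"
  shows "curve_comb e T (\<lambda>t. if t \<in> S then u t else 0) = curve_comb e S u"
    and "sum (\<lambda>t. if t \<in> S then u t else 0) T = sum u S"
  using power_moment_extend[OF assms, of u] power_moment_extend[OF assms, of u 0]
  by (simp_all add: curve_comb_eq_iff power_moment_0)

lemma curve_comb_weights_unique:
  assumes "finite S" "card S \<le> e + 1" "sum u S = sum w S" "curve_comb e S u = curve_comb e S w"
  shows "\<forall>t\<in>S. u t = w t"
proof -
  have "\<forall>j\<le>e. power_moment S (\<lambda>t. u t - w t) j = 0"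
  proof (intro allI impI)
    fix j assume "j \<le> e"
    with assms(3,4) show "power_moment S (\<lambda>t. u t - w t) j = 0"
      by (cases "j = 0") (auto simp: power_moment_diff curve_comb_eq_iff power_moment_0)
  qed
  from power_moments_vanish_imp_zero[OF assms(1,2) this] show ?thesis by simp
qed

lemma height_curve_comb:
  assumes "finite S" "card S \<le> e + 1" "\<forall>t\<in>S. 0 \<le> u t" "sum u S = 1"
  shows "height e S (curve_comb e S u) = power_moment S u (e + 1)"
  unfolding height_def
proof (rule the_equality)
  have "curve_comb (e + 1) S u \<in> conv (e + 1) S"
    using assms(3,4) by (auto simp: conv_iff_curve_comb)
  moreover have "curve_comb (e + 1) S u (e + 1) = power_moment S u (e + 1)"
    by (simp add: curve_comb_apply)
  ultimately show "\<exists>q\<in>conv (e + 1) S. proj e q = curve_comb e S u \<and> q (e + 1) = power_moment S u (e + 1)"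
    by (intro bexI[of _ "curve_comb (e + 1) S u"]) simp_all
next
  fix y assume "\<exists>q\<in>conv (e + 1) S. proj e q = curve_comb e S u \<and> q (e + 1) = y"
  then obtain q where q: "q \<in> conv (e + 1) S" "proj e q = curve_comb e S u" "q (e + 1) = y"
    by blast
  from q(1) obtain w where "\<forall>t\<in>S. 0 \<le> w t" "sum w S = 1" "q = curve_comb (e + 1) S w"
    unfolding conv_iff_curve_comb by blast
  with q have "curve_comb e S w = curve_comb e S u" "y = power_moment S w (e + 1)"
    by (simp_all add: curve_comb_apply)
  with curve_comb_weights_unique[OF assms(1,2)] assms(4) \<open>sum w S = 1\<close> have "\<forall>t\<in>S. w t = u t"
    by simp
  with \<open>y = power_moment S w (e + 1)\<close> show "y = power_moment S u (e + 1)"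
    by (simp add: power_moment_def)
qed

lemma conv_mono:
  assumes "finite T" "S \<subseteq> T"
  shows "conv e S \<subseteq> conv e T"
proof
  fix p assume "p \<in> conv e S"
  then obtain u where "\<forall>t\<in>S. 0 \<le> u t" "sum u S = 1" "p = curve_comb e S u"
    unfolding conv_iff_curve_comb by blast
  with curve_comb_extend[OF assms] show "p \<in> conv e T"
    unfolding conv_iff_curve_comb by (intro exI[of _ "\<lambda>t. if t \<in> S then u t else 0"]) simp
qed

lemma overlap_iff_point:
  assumes "finite \<sigma>" "finite \<tau>"
  shows "overlap e \<sigma> \<tau> \<longleftrightarrow> (\<exists>p\<in>conv e \<sigma> \<inter> conv e \<tau>. p \<notin> conv e (\<sigma> \<inter> \<tau>))"
  using conv_mono[of \<sigma> "\<sigma> \<inter> \<tau>" e] conv_mono[of \<tau> "\<sigma> \<inter> \<tau>" e] assms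
  unfolding overlap_def by blast

lemma curve_comb_in_conv_face:
  assumes "finite \<sigma>" "A \<subseteq> \<sigma>" "\<forall>t\<in>\<sigma>. 0 \<le> u t" "sum u \<sigma> = 1" "\<forall>t\<in>\<sigma> - A. u t = 0"
  shows "curve_comb e \<sigma> u \<in> conv e A"
proof -
  have "power_moment A u j = power_moment \<sigma> u j" for j
    using assms(1,2,5) by (intro power_moment_mono_neutral) auto
  then have "sum u A = 1" "curve_comb e \<sigma> u = curve_comb e A u"
    using assms(4) by (auto simp: power_moment_0[symmetric] curve_comb_eq_iff)
  with assms(2,3) show ?thesis unfolding conv_iff_curve_comb by auto
qed

lemma weights_vanish_off_face:
  assumes "finite \<sigma>" "card \<sigma> \<le> e + 1" "A \<subseteq> \<sigma>" "sum u \<sigma> = 1"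
    and "curve_comb e \<sigma> u \<in> conv e A"
  shows "\<forall>t\<in>\<sigma> - A. u t = 0"
proof -
  from assms(5) obtain v where "sum v A = 1" "curve_comb e \<sigma> u = curve_comb e A v"
    unfolding conv_iff_curve_comb by blast
  then have "\<forall>t\<in>\<sigma>. u t = (if t \<in> A then v t else 0)"
    using assms(4) curve_comb_extend[OF assms(1,3)]
    by (intro curve_comb_weights_unique[OF assms(1,2)]) simp_all
  then show ?thesis by simp
qed

lemma common_point_imp_signed_dependence:
  assumes fin: "finite \<sigma>" "finite \<tau>" and card: "card \<sigma> \<le> e + 1" "card \<tau> \<le> e + 1"
    and p: "p \<in> conv e \<sigma>" "p \<in> conv e \<tau>"
  obtains l where "signed_dependence e \<sigma> \<tau> l"
    and "height e \<sigma> p - height e \<tau> p = power_moment (\<sigma> \<union> \<tau>) l (e + 1)"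
    and "p \<notin> conv e (\<sigma> \<inter> \<tau>) \<longrightarrow> (\<exists>t\<in>\<sigma> \<union> \<tau>. l t \<noteq> 0)"
proof -
  obtain u where u: "\<forall>t\<in>\<sigma>. 0 \<le> u t" "sum u \<sigma> = 1" "p = curve_comb e \<sigma> u"
    using p(1) unfolding conv_iff_curve_comb by blast
  obtain w where w: "\<forall>t\<in>\<tau>. 0 \<le> w t" "sum w \<tau> = 1" "p = curve_comb e \<tau> w"
    using p(2) unfolding conv_iff_curve_comb by blast
  define l where "l t = (if t \<in> \<sigma> then u t else 0) - (if t \<in> \<tau> then w t else 0)" for t
  have moment_l: "power_moment (\<sigma> \<union> \<tau>) l j = power_moment \<sigma> u j - power_moment \<tau> w j" for j
    using fin unfolding l_def by (simp add: power_moment_diff power_moment_extend)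
  have "signed_dependence e \<sigma> \<tau> l"
    unfolding signed_dependence_def
  proof (intro conjI allI impI ballI)
    fix j assume "j \<le> e"
    with u(2,3) w(2,3) moment_l[of j] show "power_moment (\<sigma> \<union> \<tau>) l j = 0"
      by (cases "j = 0") (auto simp: power_moment_0 curve_comb_eq_iff)
  qed (use u w in \<open>auto simp: l_def\<close>)
  moreover have "height e \<sigma> p - height e \<tau> p = power_moment (\<sigma> \<union> \<tau>) l (e + 1)"
    using height_curve_comb[OF fin(1) card(1) u(1,2)] height_curve_comb[OF fin(2) card(2) w(1,2)]
      u(3) w(3) moment_l by simp
  moreover have "\<exists>t\<in>\<sigma> \<union> \<tau>. l t \<noteq> 0" if "p \<notin> conv e (\<sigma> \<inter> \<tau>)"
  proof (rule ccontr)
    assume zero: "\<not> ?thesis"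
    have "\<forall>t\<in>\<sigma> - (\<sigma> \<inter> \<tau>). u t = 0"
    proof
      fix t assume t: "t \<in> \<sigma> - (\<sigma> \<inter> \<tau>)"
      with zero have "l t = 0" by blast
      with t show "u t = 0" by (simp add: l_def)
    qed
    with curve_comb_in_conv_face[OF fin(1) _ u(1,2)] u(3) that show False by blast
  qed
  ultimately show ?thesis using that by blast
qed

text \<open>\<open>U\<close> and \<open>W\<close> are the normalised positive part of \<open>m\<close> on \<open>\<sigma>\<close> and negative part on \<open>\<tau>\<close>.\<close>
lemma signed_dependence_split:
  assumes fin: "finite \<sigma>" "finite \<tau>" and m: "signed_dependence e \<sigma> \<tau> m"
    and nonzero: "\<exists>t\<in>\<sigma> \<union> \<tau>. m t \<noteq> 0"
  obtains c U W where "0 < c" "\<forall>t\<in>\<sigma>. 0 \<le> U t" "sum U \<sigma> = 1" "\<forall>t\<in>\<tau>. 0 \<le> W t" "sum W \<tau> = 1"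
    and "\<forall>j. power_moment \<sigma> U j - power_moment \<tau> W j = power_moment (\<sigma> \<union> \<tau>) m j / c"
    and "\<forall>t\<in>\<sigma> - \<tau>. m t = c * U t" "\<forall>t\<in>\<tau> - \<sigma>. m t = - c * W t"
proof -
  define u where "u t = max (m t) 0" for t
  define w where "w t = max (- m t) 0" for t
  have m_eq: "m = (\<lambda>t. u t - w t)" and uw: "\<forall>t. 0 \<le> u t \<and> 0 \<le> w t"
    by (auto simp: u_def w_def fun_eq_iff)
  have u_zero: "\<forall>t\<in>\<tau> - \<sigma>. u t = 0" and w_zero: "\<forall>t\<in>\<sigma> - \<tau>. w t = 0"
    using m by (auto simp: signed_dependence_def u_def w_def)
  have moments: "power_moment \<sigma> u j - power_moment \<tau> w j = power_moment (\<sigma> \<union> \<tau>) m j" for j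
  proof -
    have "power_moment \<sigma> u j = power_moment (\<sigma> \<union> \<tau>) u j"
      by (rule power_moment_mono_neutral) (use fin u_zero in auto)
    moreover have "power_moment \<tau> w j = power_moment (\<sigma> \<union> \<tau>) w j"
      by (rule power_moment_mono_neutral) (use fin w_zero in auto)
    ultimately show ?thesis by (simp add: m_eq power_moment_diff)
  qed
  define c where "c = sum u \<sigma>"
  have "power_moment (\<sigma> \<union> \<tau>) m 0 = 0" using m unfolding signed_dependence_def by blast
  with moments[of 0] have "sum w \<tau> = c" by (simp add: c_def power_moment_0)
  have "0 < c"
  proof (rule ccontr)
    assume "\<not> 0 < c"
    then have "sum u \<sigma> = 0" "sum w \<tau> = 0"
      using \<open>sum w \<tau> = c\<close> uw fin by (auto simp: c_def intro!: antisym sum_nonneg)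
    then have "\<forall>t\<in>\<sigma>. u t = 0" "\<forall>t\<in>\<tau>. w t = 0"
      using fin uw by (simp_all add: sum_nonneg_eq_0_iff)
    with u_zero w_zero nonzero show False by (auto simp: m_eq)
  qed
  show ?thesis
  proof (rule that[of c "\<lambda>t. u t / c" "\<lambda>t. w t / c"])
    show "\<forall>j. power_moment \<sigma> (\<lambda>t. u t / c) j - power_moment \<tau> (\<lambda>t. w t / c) j
        = power_moment (\<sigma> \<union> \<tau>) m j / c"
      using moments
      by (simp add: power_moment_def sum_divide_distrib[symmetric] diff_divide_distrib[symmetric])
  qed (use \<open>0 < c\<close> \<open>sum w \<tau> = c\<close> uw u_zero w_zero in
      \<open>auto simp: c_def m_eq sum_divide_distrib[symmetric]\<close>)
qed

lemma signed_dependence_imp_common_point: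
  assumes fin: "finite \<sigma>" "finite \<tau>" and card: "card \<sigma> \<le> e + 1" "card \<tau> \<le> e + 1"
    and m: "signed_dependence e \<sigma> \<tau> m" and nonzero: "\<exists>t\<in>\<sigma> \<union> \<tau>. m t \<noteq> 0"
  obtains p c where "0 < c" "p \<in> conv e \<sigma>" "p \<in> conv e \<tau>" "p \<notin> conv e (\<sigma> \<inter> \<tau>)"
    and "height e \<sigma> p - height e \<tau> p = power_moment (\<sigma> \<union> \<tau>) m (e + 1) / c"
proof -
  obtain c U W where c: "0 < c" and U: "\<forall>t\<in>\<sigma>. 0 \<le> U t" "sum U \<sigma> = 1"
    and W: "\<forall>t\<in>\<tau>. 0 \<le> W t" "sum W \<tau> = 1"
    and moments: "\<forall>j. power_moment \<sigma> U j - power_moment \<tau> W j = power_moment (\<sigma> \<union> \<tau>) m j / c"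
    and m_U: "\<forall>t\<in>\<sigma> - \<tau>. m t = c * U t" and m_W: "\<forall>t\<in>\<tau> - \<sigma>. m t = - c * W t"
    by (rule signed_dependence_split[OF fin m nonzero])
  define p where "p = curve_comb e \<sigma> U"
  have "power_moment \<sigma> U j = power_moment \<tau> W j" if "j \<le> e" for j
    using m moments[rule_format, of j] that by (simp add: signed_dependence_def)
  then have p_W: "p = curve_comb e \<tau> W" by (simp add: p_def curve_comb_eq_iff)
  have "p \<notin> conv e (\<sigma> \<inter> \<tau>)"
  proof
    assume "p \<in> conv e (\<sigma> \<inter> \<tau>)"
    then have "\<forall>t\<in>\<sigma> - (\<sigma> \<inter> \<tau>). U t = 0" "\<forall>t\<in>\<tau> - (\<sigma> \<inter> \<tau>). W t = 0"
      using weights_vanish_off_face[OF fin(1) card(1) _ U(2), of "\<sigma> \<inter> \<tau>"]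
        weights_vanish_off_face[OF fin(2) card(2) _ W(2), of "\<sigma> \<inter> \<tau>"] p_def p_W by auto
    then have "\<forall>t\<in>(\<sigma> - \<tau>) \<union> (\<tau> - \<sigma>). m t = 0" using m_U m_W by auto
    with signed_dependence_eq_zero[OF fin card(1) m] nonzero show False by blast
  qed
  moreover have "p \<in> conv e \<sigma>" "p \<in> conv e \<tau>"
    using U W p_W unfolding p_def conv_iff_curve_comb by blast+
  moreover have "height e \<sigma> p - height e \<tau> p = power_moment (\<sigma> \<union> \<tau>) m (e + 1) / c"
    using height_curve_comb[OF fin(1) card(1) U] height_curve_comb[OF fin(2) card(2) W]
      moments p_def p_W by simp
  ultimately show ?thesis using that c by blast
qed

lemma overlap_iff_interlacing:
  assumes fin: "finite \<sigma>" "finite \<tau>" and card: "card \<sigma> \<le> e + 1" "card \<tau> \<le> e + 1"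
  shows "overlap e \<sigma> \<tau> \<longleftrightarrow> interlacing (e + 2) \<sigma> \<tau>"
proof
  assume "overlap e \<sigma> \<tau>"
  then obtain p where p: "p \<in> conv e \<sigma>" "p \<in> conv e \<tau>" and "p \<notin> conv e (\<sigma> \<inter> \<tau>)"
    using overlap_iff_point[OF fin] by blast
  obtain l where "signed_dependence e \<sigma> \<tau> l"
    and "height e \<sigma> p - height e \<tau> p = power_moment (\<sigma> \<union> \<tau>) l (e + 1)"
    and "p \<notin> conv e (\<sigma> \<inter> \<tau>) \<longrightarrow> (\<exists>t\<in>\<sigma> \<union> \<tau>. l t \<noteq> 0)"
    by (rule common_point_imp_signed_dependence[OF fin card p])
  with \<open>p \<notin> conv e (\<sigma> \<inter> \<tau>)\<close> have l: "signed_dependence e \<sigma> \<tau> l" "\<exists>t\<in>\<sigma> \<union> \<tau>. l t \<noteq> 0"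
    by blast+
  then have "alternates l (\<sigma> \<union> \<tau>) (e + 2)"
    using fin by (intro alternates_if_power_moments_vanish) (auto simp: signed_dependence_def)
  with l(1) show "interlacing (e + 2) \<sigma> \<tau>" by (rule alternates_imp_interlacing)
next
  assume "interlacing (e + 2) \<sigma> \<tau>"
  then obtain l where l: "signed_dependence e \<sigma> \<tau> l" "\<exists>t\<in>\<sigma> \<union> \<tau>. l t \<noteq> 0"
  proof (cases "interlacing_from (e + 2) \<sigma> \<tau>")
    case True
    then show ?thesis using that by (rule interlacing_from_imp_signed_dependence[OF fin])
  next
    case False
    with \<open>interlacing (e + 2) \<sigma> \<tau>\<close> have "interlacing_from (e + 2) \<tau> \<sigma>"
      by (simp add: interlacing_def)
    then obtain l where "signed_dependence e \<tau> \<sigma> l" "\<exists>t\<in>\<tau> \<union> \<sigma>. l t \<noteq> 0"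
      by (rule interlacing_from_imp_signed_dependence[OF fin(2,1)])
    then show ?thesis using that[of "\<lambda>t. - l t"] signed_dependence_swap by auto
  qed
  then obtain p c where "0 < c" "p \<in> conv e \<sigma>" "p \<in> conv e \<tau>" "p \<notin> conv e (\<sigma> \<inter> \<tau>)"
    and "height e \<sigma> p - height e \<tau> p = power_moment (\<sigma> \<union> \<tau>) l (e + 1) / c"
    by (rule signed_dependence_imp_common_point[OF fin card])
  then show "overlap e \<sigma> \<tau>" using overlap_iff_point[OF fin] by blast
qed

section \<open>Comparing heights\<close>

lemma interlacing_from_imp_height_less:
  assumes fin: "finite \<sigma>" "finite \<tau>" and card: "card \<sigma> \<le> d + 1" "card \<tau> \<le> d + 1"
    and "interlacing_from (d + 2) \<sigma> \<tau>"
  obtains p where "p \<in> conv d \<sigma>" "p \<in> conv d \<tau>"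
    and "(-1) ^ d * height d \<sigma> p < (-1) ^ d * height d \<tau> p"
proof -
  obtain l where l: "signed_dependence d \<sigma> \<tau> l" "\<exists>t\<in>\<sigma> \<union> \<tau>. l t \<noteq> 0"
    and l_moment: "power_moment (\<sigma> \<union> \<tau>) l (d + 1) = (-1) ^ (d + 1)"
    by (rule interlacing_from_imp_signed_dependence[OF fin assms(5)])
  obtain p c where "0 < c" "p \<in> conv d \<sigma>" "p \<in> conv d \<tau>" "p \<notin> conv d (\<sigma> \<inter> \<tau>)"
    and "height d \<sigma> p - height d \<tau> p = power_moment (\<sigma> \<union> \<tau>) l (d + 1) / c"
    by (rule signed_dependence_imp_common_point[OF fin card l])
  note h = this(5)
  have "(-1) ^ d * (height d \<sigma> p - height d \<tau> p) = (-1) ^ d * (-1) ^ (d + 1) / c"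
    unfolding h l_moment by simp
  also have "\<dots> = - 1 / c" by (cases "even d") simp_all
  finally have "(-1) ^ d * (height d \<sigma> p - height d \<tau> p) = - 1 / c" .
  moreover have "- 1 / c < 0" using \<open>0 < c\<close> by simp
  ultimately have "(-1) ^ d * height d \<sigma> p < (-1) ^ d * height d \<tau> p"
    by (simp only: right_diff_distrib)
  with \<open>p \<in> conv d \<sigma>\<close> \<open>p \<in> conv d \<tau>\<close> show ?thesis by (rule that)
qed

text \<open>If the (d+2)-interlacing sequences all start in \<open>\<sigma>\<close> but the heights were ordered the
  wrong way at some point, the two dependences could be combined into one with vanishing
  moment of order \<open>d + 1\<close>, which would force a (d+3)-interlacing sequence.\<close>
lemma height_le_if_not_interlacing:
  assumes fin: "finite \<sigma>" "finite \<tau>" and card: "card \<sigma> \<le> d + 1" "card \<tau> \<le> d + 1"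
    and not3: "\<not> interlacing (d + 3) \<sigma> \<tau>" and from2: "interlacing_from (d + 2) \<sigma> \<tau>"
    and p: "p \<in> conv d \<sigma>" "p \<in> conv d \<tau>"
  shows "(-1) ^ d * height d \<sigma> p \<le> (-1) ^ d * height d \<tau> p"
proof (rule ccontr)
  assume wrong: "\<not> ?thesis"
  define m where "m = height d \<sigma> p - height d \<tau> p"
  obtain l\<^sub>p where l\<^sub>p: "signed_dependence d \<sigma> \<tau> l\<^sub>p"
    and "m = power_moment (\<sigma> \<union> \<tau>) l\<^sub>p (d + 1)"
    and "p \<notin> conv d (\<sigma> \<inter> \<tau>) \<longrightarrow> (\<exists>t\<in>\<sigma> \<union> \<tau>. l\<^sub>p t \<noteq> 0)"
    unfolding m_def by (rule common_point_imp_signed_dependence[OF fin card p])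
  then have m_moment: "power_moment (\<sigma> \<union> \<tau>) l\<^sub>p (d + 1) = m" by simp
  have "0 < (-1) ^ d * m" using wrong by (simp add: m_def right_diff_distrib)
  then have m_abs: "\<bar>m\<bar> * (-1) ^ (d + 1) + m = 0"
    by (cases "even d") (simp_all add: abs_if)
  obtain l where l: "signed_dependence d \<sigma> \<tau> l" "\<exists>t\<in>\<sigma> \<union> \<tau>. l t \<noteq> 0"
    and l_moment: "power_moment (\<sigma> \<union> \<tau>) l (d + 1) = (-1) ^ (d + 1)"
    by (rule interlacing_from_imp_signed_dependence[OF fin from2])
  have scaled: "signed_dependence d \<sigma> \<tau> (\<lambda>t. \<bar>m\<bar> * l t)"
    by (rule signed_dependence_scale) (use l in auto)
  define L where "L = (\<lambda>t. \<bar>m\<bar> * l t + l\<^sub>p t)"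
  have L: "signed_dependence d \<sigma> \<tau> L"
    unfolding L_def by (rule signed_dependence_add[OF scaled l\<^sub>p])
  have "power_moment (\<sigma> \<union> \<tau>) L (d + 1) = 0"
    unfolding L_def power_moment_add power_moment_scale l_moment m_moment by (rule m_abs)
  with L have "\<forall>j\<le>d + 1. power_moment (\<sigma> \<union> \<tau>) L j = 0"
    by (auto simp: signed_dependence_def le_Suc_eq)
  moreover have "m \<noteq> 0" using \<open>0 < (-1) ^ d * m\<close> by auto
  then have "\<exists>t\<in>\<sigma> \<union> \<tau>. L t \<noteq> 0"
    unfolding L_def using l(2)
    by (intro signed_dependence_add_nonzero[OF fin(1,2) card(1) scaled l\<^sub>p]) auto
  ultimately have "alternates L (\<sigma> \<union> \<tau>) (d + 3)"
    using alternates_if_power_moments_vanish[of "\<sigma> \<union> \<tau>" "d + 1" L] fin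
    by (simp add: numeral_3_eq_3)
  with not3 L show False using alternates_imp_interlacing by blast
qed

lemma interlacing_plus3_iff_from_both:
  assumes "finite \<sigma>" "finite \<tau>" "card \<sigma> \<le> d + 1" "card \<tau> \<le> d + 1"
  shows "interlacing (d + 3) \<sigma> \<tau> \<longleftrightarrow> interlacing_from (d + 2) \<sigma> \<tau> \<and> interlacing_from (d + 2) \<tau> \<sigma>"
proof
  show "interlacing (d + 3) \<sigma> \<tau> \<Longrightarrow> interlacing_from (d + 2) \<sigma> \<tau> \<and> interlacing_from (d + 2) \<tau> \<sigma>"
    using interlacing_Suc_imp_from_both[of "d + 2"] by (simp add: numeral_3_eq_3)
next
  assume from_both: "interlacing_from (d + 2) \<sigma> \<tau> \<and> interlacing_from (d + 2) \<tau> \<sigma>"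
  show "interlacing (d + 3) \<sigma> \<tau>"
  proof (rule ccontr)
    assume "\<not> interlacing (d + 3) \<sigma> \<tau>"
    obtain p where "p \<in> conv d \<tau>" "p \<in> conv d \<sigma>"
      and "(-1) ^ d * height d \<tau> p < (-1) ^ d * height d \<sigma> p"
      using interlacing_from_imp_height_less[of \<tau> \<sigma>] assms from_both by blast
    with height_le_if_not_interlacing[OF assms] \<open>\<not> interlacing (d + 3) \<sigma> \<tau>\<close> from_both
    show False by fastforce
  qed
qed

lemma overlap_commute: "overlap e \<sigma> \<tau> \<longleftrightarrow> overlap e \<tau> \<sigma>"
  by (simp add: overlap_def Int_commute)

lemma overlap_height_le_iff:
  assumes fin: "finite X" "finite Y" and card: "card X \<le> d + 1" "card Y \<le> d + 1"
  shows "overlap d X Y \<and> (\<forall>p\<in>conv d X \<inter> conv d Y. (-1) ^ d * height d X p \<le> (-1) ^ d * height d Y p)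
    \<longleftrightarrow> interlacing_from (d + 2) X Y \<and> \<not> interlacing_from (d + 2) Y X"
proof
  assume le: "overlap d X Y \<and> (\<forall>p\<in>conv d X \<inter> conv d Y. (-1) ^ d * height d X p \<le> (-1) ^ d * height d Y p)"
  have "\<not> interlacing_from (d + 2) Y X"
  proof
    assume "interlacing_from (d + 2) Y X"
    then obtain p where "p \<in> conv d Y" "p \<in> conv d X"
      and "(-1) ^ d * height d Y p < (-1) ^ d * height d X p"
      by (rule interlacing_from_imp_height_less[OF fin(2,1) card(2,1)])
    moreover from le this(1,2) have "(-1) ^ d * height d X p \<le> (-1) ^ d * height d Y p" by blast
    ultimately show False by linarith
  qed
  with le overlap_iff_interlacing[OF fin card] show "interlacing_from (d + 2) X Y \<and> \<not> interlacing_from (d + 2) Y X"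
    by (simp add: interlacing_def)
next
  assume from_X: "interlacing_from (d + 2) X Y \<and> \<not> interlacing_from (d + 2) Y X"
  then have "\<not> interlacing (d + 3) X Y"
    using interlacing_plus3_iff_from_both[OF fin card] by blast
  with from_X height_le_if_not_interlacing[OF fin card] overlap_iff_interlacing[OF fin card]
  show "overlap d X Y \<and> (\<forall>p\<in>conv d X \<inter> conv d Y. (-1) ^ d * height d X p \<le> (-1) ^ d * height d Y p)"
    by (simp add: interlacing_def)
qed

lemma below_iff_interlacing_from:
  assumes fin: "finite \<sigma>" "finite \<tau>" and card: "card \<sigma> \<le> d + 1" "card \<tau> \<le> d + 1"
  shows "below d \<sigma> \<tau> \<longleftrightarrow> (if even d
           then interlacing_from (d + 2) \<sigma> \<tau> \<and> \<not> interlacing_from (d + 2) \<tau> \<sigma>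
           else interlacing_from (d + 2) \<tau> \<sigma> \<and> \<not> interlacing_from (d + 2) \<sigma> \<tau>)"
proof (cases "even d")
  case True
  then show ?thesis
    using overlap_height_le_iff[OF fin card] by (simp add: below_def)
next
  case False
  then show ?thesis
    using overlap_height_le_iff[OF fin(2,1) card(2,1)]
    by (simp add: below_def overlap_commute Int_commute)
qed

theorem corollary2p5:
  fixes d :: nat and \<sigma> \<tau> :: "real set"
  assumes "1 \<le> d" and "simplex_on d \<sigma>" and "simplex_on d \<tau>"
  defines "A \<equiv> \<not> overlap d \<sigma> \<tau>"
      and "B \<equiv> below d \<sigma> \<tau>"
      and "C \<equiv> below d \<tau> \<sigma>"
      and "D \<equiv> overlap (d + 1) \<sigma> \<tau>"
  shows "((A \<or> B \<or> C \<or> D) \<and> \<not> (A \<and> B) \<and> \<not> (A \<and> C) \<and> \<not> (A \<and> D)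
           \<and> \<not> (B \<and> C) \<and> \<not> (B \<and> D) \<and> \<not> (C \<and> D))
         \<and> (A \<longleftrightarrow> \<not> interlacing (d + 2) \<sigma> \<tau>)
         \<and> (B \<longleftrightarrow> (if even d
                 then interlacing_from (d + 2) \<sigma> \<tau> \<and> \<not> interlacing_from (d + 2) \<tau> \<sigma>
                 else interlacing_from (d + 2) \<tau> \<sigma> \<and> \<not> interlacing_from (d + 2) \<sigma> \<tau>))
         \<and> (C \<longleftrightarrow> (if even d
                 then interlacing_from (d + 2) \<tau> \<sigma> \<and> \<not> interlacing_from (d + 2) \<sigma> \<tau>
                 else interlacing_from (d + 2) \<sigma> \<tau> \<and> \<not> interlacing_from (d + 2) \<tau> \<sigma>))
         \<and> (D \<longleftrightarrow> interlacing (d + 3) \<sigma> \<tau>)"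
proof -
  have fin: "finite \<sigma>" "finite \<tau>" and card: "card \<sigma> \<le> d + 1" "card \<tau> \<le> d + 1"
    using assms(2,3) by (auto simp: simplex_on_def)
  let ?s = "interlacing_from (d + 2) \<sigma> \<tau>" and ?t = "interlacing_from (d + 2) \<tau> \<sigma>"
  have two: "interlacing (d + 2) \<sigma> \<tau> \<longleftrightarrow> ?s \<or> ?t" by (simp only: interlacing_def)
  have three: "interlacing (d + 3) \<sigma> \<tau> \<longleftrightarrow> ?s \<and> ?t"
    by (rule interlacing_plus3_iff_from_both[OF fin card])
  have "A \<longleftrightarrow> \<not> (?s \<or> ?t)"
    unfolding A_def two[symmetric] by (rule overlap_iff_interlacing[OF fin card, THEN arg_cong[of _ _ Not]])
  moreover have "D \<longleftrightarrow> ?s \<and> ?t"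
    unfolding D_def three[symmetric] using overlap_iff_interlacing[of \<sigma> \<tau> "d + 1"] fin card
    by (simp add: numeral_3_eq_3)
  moreover have "B \<longleftrightarrow> (if even d then ?s \<and> \<not> ?t else ?t \<and> \<not> ?s)"
    unfolding B_def by (rule below_iff_interlacing_from[OF fin card])
  moreover have "C \<longleftrightarrow> (if even d then ?t \<and> \<not> ?s else ?s \<and> \<not> ?t)"
    unfolding C_def by (rule below_iff_interlacing_from[OF fin(2,1) card(2,1)])
  ultimately show ?thesis unfolding two three by (cases "even d") auto
qed

end
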